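(* Let $S''=\{UD-DU : U \text{ an upper prime},\ D \text{ a lower prime}\}$. Then $S''$ generates the ideal $\mathcal{J}$ (as a two-sided ideal of $\mathcal{A}$).
   Context: $\mathcal{A}$ is the free associative $\mathbb{C}$-algebra on noncommuting generators $L,R$; words are finite products of these letters. A word is balanced if it contains equally many $L$'s and $R$'s. $\mathcal{J}$ is the two-sided ideal of $\mathcal{A}$ generated by $S=\{FG-GF : F,G \text{ nonempty balanced words}\}$. A word is prime if it is nonempty, balanced, and cannot be written as a product of two nonempty balanced words. For a balanced word $W=a_1\cdots a_n$, $e_k(W)=\sum_{i=1}^k\overline{a_i}$ ($0\le k\le n$) with $\overline{R}=1$, $\overline{L}=-1$. A prime $P$ of length $n$ is an upper prime if $e_k(P)>0$ for $1\le k\le n-1$, and a lower prime if $e_k(P)<0$ for $1\le k\le n-1$. *)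

theory Defs
  imports Complex_Main
begin

datatype letter = L | R
type_synonym word = "letter list"

text \<open>The free associative algebra over the complex numbers on L, R:
  finitely supported coefficient functions on words.\<close>
type_synonym alg = "word \<Rightarrow> complex"

definition carrierA :: "alg set" where
  "carrierA = {f. finite {w. f w \<noteq> 0}}"

definition amult :: "alg \<Rightarrow> alg \<Rightarrow> alg" where
  "amult f g = (\<lambda>w. \<Sum>(u,v)\<in>{(u,v). u @ v = w}. f u * g v)"

definition aadd :: "alg \<Rightarrow> alg \<Rightarrow> alg" where
  "aadd f g = (\<lambda>w. f w + g w)"

definition asub :: "alg \<Rightarrow> alg \<Rightarrow> alg" where
  "asub f g = (\<lambda>w. f w - g w)"

definition azero :: alg where
  "azero = (\<lambda>w. 0)"

definition mon :: "word \<Rightarrow> alg" where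
  "mon w = (\<lambda>u. if u = w then 1 else 0)"

inductive_set gen_ideal :: "alg set \<Rightarrow> alg set" for S :: "alg set" where
  gen_zero: "azero \<in> gen_ideal S"
| gen_base: "s \<in> S \<Longrightarrow> s \<in> gen_ideal S"
| gen_add: "x \<in> gen_ideal S \<Longrightarrow> y \<in> gen_ideal S \<Longrightarrow> aadd x y \<in> gen_ideal S"
| gen_lmult: "a \<in> carrierA \<Longrightarrow> x \<in> gen_ideal S \<Longrightarrow> amult a x \<in> gen_ideal S"
| gen_rmult: "a \<in> carrierA \<Longrightarrow> x \<in> gen_ideal S \<Longrightarrow> amult x a \<in> gen_ideal S"

definition balanced :: "word \<Rightarrow> bool" where
  "balanced w \<longleftrightarrow> count_list w L = count_list w R"

definition prime_word :: "word \<Rightarrow> bool" where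
  "prime_word w \<longleftrightarrow> w \<noteq> [] \<and> balanced w \<and>
     \<not> (\<exists>u v. u \<noteq> [] \<and> v \<noteq> [] \<and> balanced u \<and> balanced v \<and> w = u @ v)"

fun bar :: "letter \<Rightarrow> int" where
  "bar R = 1" | "bar L = -1"

definition ek :: "nat \<Rightarrow> word \<Rightarrow> int" where
  "ek k w = (\<Sum>i<k. bar (w ! i))"

definition upper_prime :: "word \<Rightarrow> bool" where
  "upper_prime P \<longleftrightarrow> prime_word P \<and> (\<forall>k. 1 \<le> k \<and> k \<le> length P - 1 \<longrightarrow> ek k P > 0)"

definition lower_prime :: "word \<Rightarrow> bool" where
  "lower_prime P \<longleftrightarrow> prime_word P \<and> (\<forall>k. 1 \<le> k \<and> k \<le> length P - 1 \<longrightarrow> ek k P < 0)"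

definition commS :: "alg set" where
  "commS = {asub (amult (mon F) (mon G)) (amult (mon G) (mon F)) | F G.
             F \<noteq> [] \<and> G \<noteq> [] \<and> balanced F \<and> balanced G}"

definition J :: "alg set" where
  "J = gen_ideal commS"

definition S'' :: "alg set" where
  "S'' = {asub (amult (mon U) (mon D)) (amult (mon D) (mon U)) | U D.
             upper_prime U \<and> lower_prime D}"

end

theory Submission
  imports Defs
begin

text \<open>Modulo the ideal generated by \<open>S''\<close>, the words commuting with a fixed word are
  closed under concatenation, so it suffices to commute two prime words. A prime word is
  upper or lower according to its first letter and has the shape \<open>aYb\<close> with \<open>b \<noteq> a\<close> and
  \<open>Y\<close> balanced. An upper and a lower prime commute by a generator of \<open>S''\<close>; two primes
  \<open>aYb\<close>, \<open>aZb\<close> of the same kind commute by induction on length, using that the shorter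
  balanced words \<open>Y\<close>, \<open>Z\<close> and \<open>ba\<close> commute with each other.\<close>

lemma finite_splits: "finite {(u, v). u @ v = (w::word)}"
proof -
  have "{(u, v). u @ v = w} \<subseteq> (\<lambda>i. (take i w, drop i w)) ` {..length w}"
  proof
    fix p assume "p \<in> {(u, v). u @ v = w}"
    then obtain u v where "p = (u, v)" "u @ v = w" by auto
    then show "p \<in> (\<lambda>i. (take i w, drop i w)) ` {..length w}"
      by (intro image_eqI[where x = "length u"]) auto
  qed
  then show ?thesis by (rule finite_subset) simp
qed

lemma amult_mon_mon: "amult (mon u) (mon v) = mon (u @ v)"
proof
  fix w
  have "amult (mon u) (mon v) w = (\<Sum>p\<in>{(a, b). a @ b = w}. if p = (u, v) then 1 else 0)"
    unfolding amult_def split_def by (rule sum.cong) (simp_all add: mon_def prod_eq_iff)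
  also have "\<dots> = mon (u @ v) w"
    by (auto simp: sum.delta[OF finite_splits] mon_def)
  finally show "amult (mon u) (mon v) w = mon (u @ v) w" .
qed

lemma amult_const_left: "amult (\<lambda>u. if u = [] then c else 0) f = (\<lambda>w. c * f w)"
proof
  fix w
  have "amult (\<lambda>u. if u = [] then c else 0) f w
      = (\<Sum>p\<in>{(a, b). a @ b = w}. if p = ([], w) then c * f w else 0)"
    unfolding amult_def split_def by (rule sum.cong) (auto simp: prod_eq_iff)
  also have "\<dots> = c * f w"
    by (simp add: sum.delta[OF finite_splits])
  finally show "amult (\<lambda>u. if u = [] then c else 0) f w = c * f w" .
qed

lemma amult_asub_left: "amult (asub f g) h = asub (amult f h) (amult g h)"
  unfolding amult_def asub_def
  by (auto simp: fun_eq_iff left_diff_distrib sum_subtractf split_def)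

lemma amult_asub_right: "amult h (asub f g) = asub (amult h f) (amult h g)"
  unfolding amult_def asub_def
  by (auto simp: fun_eq_iff right_diff_distrib sum_subtractf split_def)

lemma mon_in_carrierA: "mon u \<in> carrierA"
  by (simp add: carrierA_def mon_def)

lemma gen_ideal_uminus:
  assumes "x \<in> gen_ideal S"
  shows "(\<lambda>w. - x w) \<in> gen_ideal S"
proof -
  have "(\<lambda>u. if u = [] then -1 else 0 :: complex) \<in> carrierA"
    by (simp add: carrierA_def)
  from gen_lmult[OF this assms] show ?thesis
    by (simp add: amult_const_left)
qed

lemma gen_ideal_least:
  assumes "T \<subseteq> gen_ideal S"
  shows "gen_ideal T \<subseteq> gen_ideal S"
proof
  fix x assume "x \<in> gen_ideal T"
  then show "x \<in> gen_ideal S"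
  proof induction
    case (gen_base s)
    then show ?case using assms by blast
  qed (simp_all add: gen_zero gen_add gen_lmult gen_rmult)
qed

lemma gen_ideal_mono: "T \<subseteq> S \<Longrightarrow> gen_ideal T \<subseteq> gen_ideal S"
  by (rule gen_ideal_least) (auto intro: gen_base)

definition mon_equiv :: "alg set \<Rightarrow> word \<Rightarrow> word \<Rightarrow> bool" where
  "mon_equiv S x y \<longleftrightarrow> asub (mon x) (mon y) \<in> gen_ideal S"

lemma mon_equiv_refl: "mon_equiv S x x"
proof -
  have "asub (mon x) (mon x) = azero" by (simp add: asub_def azero_def)
  then show ?thesis by (simp add: mon_equiv_def gen_zero)
qed

lemma mon_equiv_sym: "mon_equiv S x y \<Longrightarrow> mon_equiv S y x"
  unfolding mon_equiv_def
  by (drule gen_ideal_uminus) (simp add: asub_def)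

lemma mon_equiv_trans [trans]: "mon_equiv S x y \<Longrightarrow> mon_equiv S y z \<Longrightarrow> mon_equiv S x z"
  unfolding mon_equiv_def
  by (drule (1) gen_add) (simp add: aadd_def asub_def)

lemma mon_equiv_context:
  assumes "mon_equiv S x y"
  shows "mon_equiv S (a @ x @ b) (a @ y @ b)"
proof -
  have "amult (mon a) (amult (asub (mon x) (mon y)) (mon b)) \<in> gen_ideal S"
    using assms by (intro gen_lmult gen_rmult mon_in_carrierA) (simp add: mon_equiv_def)
  then show ?thesis
    by (simp add: mon_equiv_def amult_asub_left amult_asub_right amult_mon_mon)
qed

lemma mon_equiv_commute_append:
  assumes "mon_equiv S (u @ x) (x @ u)" and "mon_equiv S (v @ x) (x @ v)"
  shows "mon_equiv S (u @ v @ x) (x @ u @ v)"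
proof -
  have "mon_equiv S (u @ v @ x) (u @ x @ v)"
    using mon_equiv_context[OF assms(2), of u "[]"] by simp
  moreover have "mon_equiv S (u @ x @ v) (x @ u @ v)"
    using mon_equiv_context[OF assms(1), of "[]" v] by simp
  ultimately show ?thesis by (rule mon_equiv_trans)
qed

definition height :: "word \<Rightarrow> int" where
  "height w = int (count_list w R) - int (count_list w L)"

lemma height_Nil [simp]: "height [] = 0"
  by (simp add: height_def)

lemma height_Cons [simp]: "height (x # w) = bar x + height w"
  by (cases x) (simp_all add: height_def)

lemma height_append [simp]: "height (u @ v) = height u + height v"
  by (simp add: height_def)

lemma balanced_iff_height: "balanced w \<longleftrightarrow> height w = 0"
  by (auto simp: balanced_def height_def)

lemma ek_eq_height_take: "k \<le> length w \<Longrightarrow> ek k w = height (take k w)"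
proof (induction k)
  case 0
  then show ?case by (simp add: ek_def)
next
  case (Suc k)
  then show ?case by (simp add: ek_def take_Suc_conv_app_nth)
qed

lemma prime_word_height_take_nonzero:
  assumes "prime_word F" and "0 < k" and "k < length F"
  shows "height (take k F) \<noteq> 0"
proof
  assume "height (take k F) = 0"
  moreover have "height (take k F) + height (drop k F) = 0"
    using assms(1) by (simp add: prime_word_def balanced_iff_height flip: height_append)
  ultimately have "balanced (take k F)" and "balanced (drop k F)"
    by (simp_all add: balanced_iff_height)
  moreover have "take k F \<noteq> []" and "drop k F \<noteq> []"
    using assms(2,3) by auto
  ultimately have "\<exists>u v. u \<noteq> [] \<and> v \<noteq> [] \<and> balanced u \<and> balanced v \<and> F = u @ v"
    by (intro exI[of _ "take k F"] exI[of _ "drop k F"]) simp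
  with assms(1) show False
    unfolding prime_word_def by blast
qed

text \<open>A proper prefix of height 0 would split \<open>F\<close> into two balanced words; as the
  height moves in steps of \<open>\<plusminus>1\<close>, it therefore keeps the sign of the first letter.\<close>

lemma prime_word_height_take_sign:
  assumes "prime_word F" and "0 < k" and "k < length F"
  shows "bar (hd F) * height (take k F) > 0"
  using assms(2,3)
proof (induction k)
  case 0
  then show ?case by simp
next
  case (Suc k)
  show ?case
  proof (cases "k = 0")
    case True
    then show ?thesis
      using Suc.prems by (cases F; cases "hd F") auto
  next
    case False
    have "height (take (Suc k) F) = height (take k F) + bar (F ! k)"
      using Suc.prems by (simp add: take_Suc_conv_app_nth)
    moreover have "bar (hd F) * height (take k F) > 0"
      using False Suc by simp
    moreover have "height (take (Suc k) F) \<noteq> 0"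
      using prime_word_height_take_nonzero[OF assms(1)] Suc.prems by blast
    ultimately show ?thesis
      by (cases "hd F"; cases "F ! k") (auto simp: zero_less_mult_iff)
  qed
qed

lemma prime_word_length_ge_2:
  assumes "prime_word F"
  shows "2 \<le> length F"
proof (rule ccontr)
  assume "\<not> 2 \<le> length F"
  moreover have "F \<noteq> []" and "height F = 0"
    using assms by (auto simp: prime_word_def balanced_iff_height)
  ultimately obtain x where "F = [x]"
    by (cases F) (auto simp: not_le less_Suc_eq_0_disj)
  with \<open>height F = 0\<close> show False
    by (cases x) auto
qed

lemma prime_word_ek_sign:
  assumes "prime_word F" and "1 \<le> k" and "k \<le> length F - 1"
  shows "bar (hd F) * ek k F > 0"
proof -
  have "0 < k" and "k < length F"
    using assms(2,3) prime_word_length_ge_2[OF assms(1)] by linarith+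
  then show ?thesis
    using prime_word_height_take_sign[OF assms(1)] by (simp add: ek_eq_height_take)
qed

lemma prime_word_upper_prime: "prime_word F \<Longrightarrow> hd F = R \<Longrightarrow> upper_prime F"
  using prime_word_ek_sign[of F] by (simp add: upper_prime_def)

lemma prime_word_lower_prime: "prime_word F \<Longrightarrow> hd F = L \<Longrightarrow> lower_prime F"
  using prime_word_ek_sign[of F] by (simp add: lower_prime_def)

lemma prime_word_last_neq_hd:
  assumes "prime_word F"
  shows "last F \<noteq> hd F"
proof -
  let ?n = "length F"
  have "2 \<le> ?n"
    using prime_word_length_ge_2[OF assms] .
  then have F: "F = take (?n - 1) F @ [last F]"
    by (metis append_butlast_last_id butlast_conv_take list.size(3) not_numeral_le_zero)
  have "height F = 0"
    using assms by (simp add: prime_word_def balanced_iff_height)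
  then have "bar (last F) = - height (take (?n - 1) F)"
    using arg_cong[OF F, of height] by simp
  moreover have "bar (hd F) * height (take (?n - 1) F) > 0"
    using prime_word_height_take_sign[OF assms] \<open>2 \<le> ?n\<close> by simp
  ultimately show ?thesis
    by (cases "hd F"; cases "last F") auto
qed

lemma prime_word_hd_last:
  assumes "prime_word F"
  obtains Y where "F = hd F # Y @ [last F]" and "balanced Y"
proof
  have "2 \<le> length F"
    using prime_word_length_ge_2[OF assms] .
  then show F: "F = hd F # butlast (tl F) @ [last F]"
    by (cases F) (auto simp: last_ConsR)
  have "bar (hd F) + bar (last F) = 0"
    using prime_word_last_neq_hd[OF assms] by (cases "hd F"; cases "last F") auto
  moreover have "height F = 0"
    using assms by (simp add: prime_word_def balanced_iff_height)
  ultimately show "balanced (butlast (tl F))"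
    using arg_cong[OF F, of height] by (simp add: balanced_iff_height)
qed

text \<open>Used with \<open>b \<noteq> a\<close>, so that \<open>[b, a]\<close> is balanced and the hypotheses are instances
  of the induction on length below.\<close>

lemma mon_equiv_commute_same_ends:
  assumes "mon_equiv S ([b, a] @ Y) (Y @ [b, a])"
    and "mon_equiv S ([b, a] @ Z) (Z @ [b, a])"
    and "mon_equiv S (Y @ Z) (Z @ Y)"
  shows "mon_equiv S ((a # Y @ [b]) @ (a # Z @ [b])) ((a # Z @ [b]) @ (a # Y @ [b]))"
proof -
  have "mon_equiv S ((a # Y @ [b]) @ (a # Z @ [b])) (a # Y @ Z @ [b, a, b])"
    using mon_equiv_context[OF assms(2), of "a # Y" "[b]"] by simp
  also have "mon_equiv S \<dots> (a # Z @ Y @ [b, a, b])"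
    using mon_equiv_context[OF assms(3), of "[a]" "[b, a, b]"] by simp
  also have "mon_equiv S \<dots> ((a # Z @ [b]) @ (a # Y @ [b]))"
    using mon_equiv_sym[OF mon_equiv_context[OF assms(1), of "a # Z" "[b]"]] by simp
  finally show ?thesis .
qed

lemma mon_equiv_upper_lower:
  assumes "upper_prime U" and "lower_prime D"
  shows "mon_equiv S'' (U @ D) (D @ U)"
proof -
  have "asub (amult (mon U) (mon D)) (amult (mon D) (mon U)) \<in> S''"
    using assms unfolding S''_def by blast
  then show ?thesis
    unfolding mon_equiv_def by (simp add: gen_base flip: amult_mon_mon)
qed

lemma balanced_commute_mon_equiv:
  assumes "balanced F" and "balanced G"
  shows "mon_equiv S'' (F @ G) (G @ F)"
  using assms
proof (induction "length F + length G" arbitrary: F G rule: less_induct)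
  case less
  consider (empty) "F = [] \<or> G = []"
    | (F_split) "F \<noteq> []" "\<not> prime_word F"
    | (G_split) "G \<noteq> []" "\<not> prime_word G"
    | (opposite) "prime_word F" "prime_word G" "hd F \<noteq> hd G"
    | (same_hd) "prime_word F" "prime_word G" "hd F = hd G"
    by blast
  then show ?case
  proof cases
    case empty
    then show ?thesis by (auto intro: mon_equiv_refl)
  next
    case F_split
    then obtain u v where "F = u @ v" "u \<noteq> []" "v \<noteq> []" "balanced u" "balanced v"
      using less.prems unfolding prime_word_def by blast
    then show ?thesis
      using less by (simp add: mon_equiv_commute_append)
  next
    case G_split
    then obtain u v where "G = u @ v" "u \<noteq> []" "v \<noteq> []" "balanced u" "balanced v"
      using less.prems unfolding prime_word_def by blast
    then show ?thesis
      using less by (simp add: mon_equiv_sym mon_equiv_commute_append)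
  next
    case opposite
    then show ?thesis
      by (cases "hd F"; cases "hd G")
        (auto intro: mon_equiv_sym mon_equiv_upper_lower prime_word_upper_prime prime_word_lower_prime)
  next
    case same_hd
    define a b where "a = hd F" and "b = last F"
    have "hd G = a" and "last G = b"
      using prime_word_last_neq_hd[of F] prime_word_last_neq_hd[of G] same_hd
      unfolding a_def b_def by (cases "hd F"; cases "last F"; cases "last G"; simp)+
    obtain Y where F: "F = a # Y @ [b]" and "balanced Y"
      using prime_word_hd_last[OF \<open>prime_word F\<close>] unfolding a_def b_def .
    obtain Z where G: "G = a # Z @ [b]" and "balanced Z"
      using prime_word_hd_last[OF \<open>prime_word G\<close>] unfolding \<open>hd G = a\<close> \<open>last G = b\<close> .
    have "balanced [b, a]"
      using prime_word_last_neq_hd[OF \<open>prime_word F\<close>] unfolding a_def b_def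
      by (cases "hd F"; cases "last F") (auto simp: balanced_def)
    then show ?thesis
      unfolding F G using \<open>balanced Y\<close> \<open>balanced Z\<close>
      by (intro mon_equiv_commute_same_ends less.hyps) (simp_all add: F G)
  qed
qed

lemma S''_subset_commS: "S'' \<subseteq> commS"
proof
  fix s assume "s \<in> S''"
  then obtain U D where s: "s = asub (amult (mon U) (mon D)) (amult (mon D) (mon U))"
    and "upper_prime U" and "lower_prime D"
    unfolding S''_def by blast
  then have "U \<noteq> [] \<and> D \<noteq> [] \<and> balanced U \<and> balanced D"
    by (simp add: upper_prime_def lower_prime_def prime_word_def)
  with s show "s \<in> commS"
    unfolding commS_def by blast
qed

lemma commS_subset_gen_ideal_S'': "commS \<subseteq> gen_ideal S''"
proof
  fix s assume "s \<in> commS"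
  then obtain F G where "s = asub (mon (F @ G)) (mon (G @ F))" and "balanced F" and "balanced G"
    unfolding commS_def amult_mon_mon by blast
  then show "s \<in> gen_ideal S''"
    using balanced_commute_mon_equiv unfolding mon_equiv_def by blast
qed

theorem proposition5p3:
  shows "gen_ideal S'' = J"
  unfolding J_def
  using gen_ideal_mono[OF S''_subset_commS] gen_ideal_least[OF commS_subset_gen_ideal_S'']
  by (rule antisym)

end
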